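(* Let $u\le v$ be positive integers, $n\ge0$, $I\in\mathrm{Hilb}^n(\{x^uy^v=0\},0)$, and $J^k=I\cap(x^ky^k)$. For $0\le k\le v-1$ define $\Delta_k=0$ if $x^ky^k\in I$; $\Delta_k=i+j$ if $J^k$ is of type ① with exponent pair $(i,j)$; and $\Delta_k=i+j-1$ if $J^k$ is of type ② with exponent pair $(i,j)$. Then each $J^k$ ($0\le k\le v-1$) falls into exactly one of these three cases, and $$\sum_{k=0}^{v-1}\Delta_k=n.$$
   Context: $\mathrm{Hilb}^n(\{x^uy^v=0\},0)$ is the set of ideals $I\subset\mathbb{C}[[x,y]]$ with $\dim_{\mathbb{C}}\mathbb{C}[[x,y]]/I=n$, supported at the origin, with $x^uy^v\in I$. $J^k$ is of type ① with exponent pair $(i,j)$ if there are $a,b\in\mathbb{C}\setminus\{0\}$, integers $i,j\ge1$, $h\in\mathbb{C}[[x,y]]$ with $E=x^ky^k(ax^i+by^j)+x^{k+1}y^{k+1}h\in J^k$ and $J^k=J^{k+1}+(E)$; it is of type ② with exponent pair $(i,j)$ if there are integers $i,j\ge1$, $h_1,h_2\in\mathbb{C}[[x,y]]$ with $E_1=x^ky^kx^i+x^{k+1}y^{k+1}h_1$, $E_2=x^ky^ky^j+x^{k+1}y^{k+1}h_2$ in $J^k$ and $J^k=J^{k+1}+(E_1,E_2)$, and it is not of type ①. (In the paper, $\Delta_k$ is the number of boxes in the $k$th row of the associated weak diagonal partition, so the claim says this partition has $n$ boxes in total.) *)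

theory Defs
  imports "HOL-Computational_Algebra.Formal_Power_Series"
begin

text \<open>C[[x,y]] is modelled as C[[y]][[x]]: formal power series in x whose
coefficients are formal power series in y.\<close>
type_synonym ps = "complex fps fps"

definition vx :: ps where "vx = fps_X"
definition vy :: ps where "vy = fps_const fps_X"
definition sc :: "complex \<Rightarrow> ps" where "sc c = fps_const (fps_const c)"

definition is_ideal :: "ps set \<Rightarrow> bool" where
  "is_ideal I \<longleftrightarrow> 0 \<in> I \<and> (\<forall>a\<in>I. \<forall>b\<in>I. a + b \<in> I) \<and> (\<forall>a\<in>I. \<forall>r. r * a \<in> I)"

text \<open>dim_C (C[[x,y]]/I) = n: there are n elements whose classes form a C-basis of the quotient.\<close>
definition colength :: "ps set \<Rightarrow> nat \<Rightarrow> bool" where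
  "colength I n \<longleftrightarrow> (\<exists>f :: nat \<Rightarrow> ps.
      (\<forall>g. \<exists>c :: nat \<Rightarrow> complex. g - (\<Sum>i<n. sc (c i) * f i) \<in> I) \<and>
      (\<forall>c :: nat \<Rightarrow> complex. (\<Sum>i<n. sc (c i) * f i) \<in> I \<longrightarrow> (\<forall>i<n. c i = 0)))"

text \<open>Hilb^n({x^u y^v = 0},0). (Finite colength ideals of the local ring C[[x,y]] are
automatically supported at the origin.)\<close>
definition hilb_curve :: "nat \<Rightarrow> nat \<Rightarrow> nat \<Rightarrow> ps set \<Rightarrow> bool" where
  "hilb_curve u v n I \<longleftrightarrow> is_ideal I \<and> colength I n \<and> vx ^ u * vy ^ v \<in> I"

definition principal :: "ps \<Rightarrow> ps set" where
  "principal a = {a * g | g. True}"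

definition ideal2 :: "ps \<Rightarrow> ps \<Rightarrow> ps set" where
  "ideal2 a b = {g1 * a + g2 * b | g1 g2. True}"

definition ideal_sum :: "ps set \<Rightarrow> ps set \<Rightarrow> ps set" where
  "ideal_sum A B = {a + b | a b. a \<in> A \<and> b \<in> B}"

definition Jk :: "ps set \<Rightarrow> nat \<Rightarrow> ps set" where
  "Jk I k = I \<inter> principal (vx ^ k * vy ^ k)"

definition type1 :: "ps set \<Rightarrow> nat \<Rightarrow> nat \<Rightarrow> nat \<Rightarrow> bool" where
  "type1 I k i j \<longleftrightarrow> i \<ge> 1 \<and> j \<ge> 1 \<and>
     (\<exists>a b h. a \<noteq> 0 \<and> b \<noteq> 0 \<and>
        (let E = vx ^ k * vy ^ k * (sc a * vx ^ i + sc b * vy ^ j) + vx ^ (k+1) * vy ^ (k+1) * h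
         in E \<in> Jk I k \<and> Jk I k = ideal_sum (Jk I (k+1)) (principal E)))"

definition is_type1 :: "ps set \<Rightarrow> nat \<Rightarrow> bool" where
  "is_type1 I k \<longleftrightarrow> (\<exists>i j. type1 I k i j)"

definition type2 :: "ps set \<Rightarrow> nat \<Rightarrow> nat \<Rightarrow> nat \<Rightarrow> bool" where
  "type2 I k i j \<longleftrightarrow> i \<ge> 1 \<and> j \<ge> 1 \<and>
     (\<exists>h1 h2.
        (let E1 = vx ^ k * vy ^ k * vx ^ i + vx ^ (k+1) * vy ^ (k+1) * h1;
             E2 = vx ^ k * vy ^ k * vy ^ j + vx ^ (k+1) * vy ^ (k+1) * h2
         in E1 \<in> Jk I k \<and> E2 \<in> Jk I k \<and> Jk I k = ideal_sum (Jk I (k+1)) (ideal2 E1 E2)))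
     \<and> \<not> is_type1 I k"

definition is_type2 :: "ps set \<Rightarrow> nat \<Rightarrow> bool" where
  "is_type2 I k \<longleftrightarrow> (\<exists>i j. type2 I k i j)"

definition delta_rel :: "ps set \<Rightarrow> nat \<Rightarrow> nat \<Rightarrow> bool" where
  "delta_rel I k d \<longleftrightarrow>
     (vx ^ k * vy ^ k \<in> I \<and> d = 0) \<or>
     (\<exists>i j. type1 I k i j \<and> d = i + j) \<or>
     (\<exists>i j. type2 I k i j \<and> d = i + j - 1)"

end

theory Submission
  imports Defs
begin

text \<open>
  Write \<open>m\<^sub>k = x\<^sup>k y\<^sup>k\<close> and \<open>M\<^sub>k = I + (m\<^sub>k)\<close>. Then
  \<open>\<complex>[[x,y]] = M\<^sub>0 \<supseteq> M\<^sub>1 \<supseteq> \<dots> \<supseteq> M\<^sub>v = I\<close>, the last equality because \<open>x\<^sup>v y\<^sup>v\<close> is a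
  multiple of \<open>x\<^sup>u y\<^sup>v\<close>. Multiplication by \<open>m\<^sub>k\<close> maps \<open>\<complex>[[x,y]]\<close> onto \<open>M\<^sub>k / M\<^sub>k\<^sub>+\<^sub>1\<close>
  with kernel \<open>L\<^sub>k = (I : m\<^sub>k) + (xy)\<close>, so \<open>n\<close> is the sum of the colengths of the \<open>L\<^sub>k\<close>.

  Restriction to the two axes identifies \<open>\<complex>[[x,y]]/(xy)\<close> with the ring of pairs
  \<open>(p(x), q(y))\<close> with \<open>p(0) = q(0)\<close>, and \<open>L\<^sub>k\<close> with the image of \<open>(I : m\<^sub>k)\<close>. If
  \<open>m\<^sub>k \<in> I\<close> this image is the whole ring. Otherwise it is a proper ideal which, as \<open>I\<close> has
  finite colength, contains nonzero pairs \<open>(p, 0)\<close> and \<open>(0, q)\<close>; such an ideal is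
  generated either by a single pair \<open>(a x\<^sup>i, b y\<^sup>j)\<close> or by \<open>(x\<^sup>i, 0)\<close> and \<open>(0, y\<^sup>j)\<close>. These
  are exactly the types 1 and 2, and the two ideals have colength \<open>i + j\<close> and \<open>i + j - 1\<close>.
\<close>

section \<open>Ideals of \<open>\<complex>[[x,y]]\<close>\<close>

lemma vx_neq_0 [simp]: "vx \<noteq> 0"
  by (simp add: vx_def)

lemma vy_neq_0 [simp]: "vy \<noteq> 0"
  by (simp add: vy_def)

lemma xy_pow_Suc: "vx ^ Suc k * vy ^ Suc k = vx ^ k * vy ^ k * (vx * vy)"
  by (simp add: mult_ac)

lemma sc_0 [simp]: "sc 0 = 0" by (simp add: sc_def)
lemma sc_1 [simp]: "sc 1 = 1" by (simp add: sc_def)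
lemma sc_add: "sc (a + b) = sc a + sc b" by (simp add: sc_def)
lemma sc_mult: "sc (a * b) = sc a * sc b" by (simp add: sc_def)
lemma sc_uminus: "sc (- a) = - sc a" by (simp add: sc_def)
lemma sc_diff: "sc (a - b) = sc a - sc b" by (simp add: sc_def)
lemma sc_sum: "sc (sum h A) = (\<Sum>i\<in>A. sc (h i))"
  by (induct A rule: infinite_finite_induct) (auto simp: sc_add)

lemma is_ideal_zero: "is_ideal I \<Longrightarrow> 0 \<in> I"
  by (simp add: is_ideal_def)

lemma is_ideal_add: "is_ideal I \<Longrightarrow> a \<in> I \<Longrightarrow> b \<in> I \<Longrightarrow> a + b \<in> I"
  by (simp add: is_ideal_def)

lemma is_ideal_mult: "is_ideal I \<Longrightarrow> a \<in> I \<Longrightarrow> r * a \<in> I"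
  by (simp add: is_ideal_def)

lemma is_ideal_mult_right: "is_ideal I \<Longrightarrow> a \<in> I \<Longrightarrow> a * r \<in> I"
  by (simp add: is_ideal_def mult.commute)

lemma is_ideal_diff: "is_ideal I \<Longrightarrow> a \<in> I \<Longrightarrow> b \<in> I \<Longrightarrow> a - b \<in> I"
  using is_ideal_add[of I a "(-1) * b"] is_ideal_mult[of I b "-1"] by simp

lemma is_ideal_sum: "is_ideal I \<Longrightarrow> (\<And>i. i \<in> A \<Longrightarrow> f i \<in> I) \<Longrightarrow> sum f A \<in> I"
  by (induct A rule: infinite_finite_induct) (auto simp: is_ideal_zero is_ideal_add)

lemma is_ideal_Int: "is_ideal A \<Longrightarrow> is_ideal B \<Longrightarrow> is_ideal (A \<inter> B)"
  by (simp add: is_ideal_def)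

lemma mem_principal: "x \<in> principal a \<longleftrightarrow> (\<exists>g. x = a * g)"
  by (auto simp: principal_def)

lemma mem_ideal2: "x \<in> ideal2 a b \<longleftrightarrow> (\<exists>g1 g2. x = g1 * a + g2 * b)"
  by (auto simp: ideal2_def)

lemma mem_ideal_sum: "x \<in> ideal_sum A B \<longleftrightarrow> (\<exists>a b. x = a + b \<and> a \<in> A \<and> b \<in> B)"
  by (auto simp: ideal_sum_def)

lemma mem_Jk: "x \<in> Jk I k \<longleftrightarrow> x \<in> I \<and> (\<exists>g. x = vx ^ k * vy ^ k * g)"
  by (auto simp: Jk_def mem_principal)

lemma is_ideal_principal: "is_ideal (principal a)"
proof -
  have "0 = a * 0" "a * g + a * g' = a * (g + g')" "r * (a * g) = a * (r * g)" for g g' r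
    by (simp_all add: distrib_left mult.left_commute)
  then show ?thesis
    unfolding is_ideal_def principal_def by blast
qed

lemma principal_subset: "is_ideal A \<Longrightarrow> a \<in> A \<Longrightarrow> principal a \<subseteq> A"
  unfolding mem_principal subset_iff using is_ideal_mult_right by blast

lemma ideal2_subset: "is_ideal A \<Longrightarrow> a \<in> A \<Longrightarrow> b \<in> A \<Longrightarrow> ideal2 a b \<subseteq> A"
  unfolding mem_ideal2 subset_iff using is_ideal_add is_ideal_mult by blast

lemma is_ideal_ideal_sum:
  assumes A: "is_ideal A" and B: "is_ideal B"
  shows "is_ideal (ideal_sum A B)"
  unfolding is_ideal_def
proof (intro conjI ballI allI)
  show "0 \<in> ideal_sum A B"
    unfolding mem_ideal_sum using is_ideal_zero[OF A] is_ideal_zero[OF B] by force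
next
  fix x y assume "x \<in> ideal_sum A B" "y \<in> ideal_sum A B"
  then obtain a b a' b' where ab: "x = a + b" "y = a' + b'" "a \<in> A" "b \<in> B" "a' \<in> A" "b' \<in> B"
    unfolding mem_ideal_sum by blast
  then have "x + y = (a + a') + (b + b')" by (simp add: ac_simps)
  then show "x + y \<in> ideal_sum A B"
    unfolding mem_ideal_sum using ab is_ideal_add[OF A] is_ideal_add[OF B] by blast
next
  fix x r assume "x \<in> ideal_sum A B"
  then obtain a b where "x = a + b" "a \<in> A" "b \<in> B"
    unfolding mem_ideal_sum by blast
  then have "r * x = r * a + r * b" "r * a \<in> A" "r * b \<in> B"
    using is_ideal_mult[OF A] is_ideal_mult[OF B] by (simp_all add: distrib_left)
  then show "r * x \<in> ideal_sum A B"
    unfolding mem_ideal_sum by blast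
qed

lemma is_ideal_Jk: "is_ideal I \<Longrightarrow> is_ideal (Jk I k)"
  unfolding Jk_def by (simp add: is_ideal_Int is_ideal_principal)

lemma Jk_Suc_subset: "Jk I (Suc k) \<subseteq> Jk I k"
  unfolding mem_Jk subset_iff by (auto simp: xy_pow_Suc mult.assoc)

definition colon :: "ps set \<Rightarrow> ps \<Rightarrow> ps set" where
  "colon I m = {g. m * g \<in> I}"

lemma is_ideal_colon: "is_ideal I \<Longrightarrow> is_ideal (colon I m)"
  unfolding is_ideal_def colon_def by (auto simp: distrib_left mult.left_commute)

lemma subset_colon: "is_ideal I \<Longrightarrow> I \<subseteq> colon I m"
  unfolding colon_def using is_ideal_mult by blast

lemma colon_eq_UNIV: "is_ideal I \<Longrightarrow> m \<in> I \<Longrightarrow> colon I m = UNIV"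
  unfolding colon_def using is_ideal_mult_right by blast

section \<open>Restriction to the coordinate axes\<close>

text \<open>\<open>at_y0 g\<close> is \<open>g(x, 0)\<close> and \<open>at_x0 g\<close> is \<open>g(0, y)\<close>; recall that \<open>ps\<close> is \<open>\<complex>[[y]][[x]]\<close>.\<close>

definition at_y0 :: "ps \<Rightarrow> complex fps" where
  "at_y0 g = Abs_fps (\<lambda>m. fps_nth (fps_nth g m) 0)"

definition at_x0 :: "ps \<Rightarrow> complex fps" where
  "at_x0 g = fps_nth g 0"

definition axes :: "ps \<Rightarrow> complex fps \<times> complex fps" where
  "axes g = (at_y0 g, at_x0 g)"

definition of_x :: "complex fps \<Rightarrow> ps" where
  "of_x p = Abs_fps (\<lambda>m. fps_const (fps_nth p m))"

definition glue_axes :: "complex fps \<Rightarrow> complex fps \<Rightarrow> ps" where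
  "glue_axes p q = of_x p + fps_const q - sc (fps_nth p 0)"

lemma at_y0_add [simp]: "at_y0 (a + b) = at_y0 a + at_y0 b" by (simp add: at_y0_def fps_eq_iff)
lemma at_y0_diff [simp]: "at_y0 (a - b) = at_y0 a - at_y0 b" by (simp add: at_y0_def fps_eq_iff)
lemma at_y0_0 [simp]: "at_y0 0 = 0" by (simp add: at_y0_def fps_eq_iff)
lemma at_y0_1 [simp]: "at_y0 1 = 1" by (simp add: at_y0_def fps_eq_iff)
lemma at_y0_mult [simp]: "at_y0 (a * b) = at_y0 a * at_y0 b"
  by (simp add: at_y0_def fps_eq_iff fps_mult_nth fps_sum_nth)
lemma at_y0_power [simp]: "at_y0 (a ^ n) = at_y0 a ^ n" by (induct n) auto
lemma at_y0_sum [simp]: "at_y0 (sum f A) = (\<Sum>i\<in>A. at_y0 (f i))"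
  by (induct A rule: infinite_finite_induct) auto
lemma at_y0_sc [simp]: "at_y0 (sc c) = fps_const c" by (simp add: at_y0_def sc_def fps_eq_iff)
lemma at_y0_vx [simp]: "at_y0 vx = fps_X" by (simp add: at_y0_def vx_def fps_eq_iff)
lemma at_y0_vy [simp]: "at_y0 vy = 0" by (simp add: at_y0_def vy_def fps_eq_iff)
lemma at_y0_of_x [simp]: "at_y0 (of_x p) = p" by (simp add: at_y0_def of_x_def fps_eq_iff)
lemma at_y0_fps_const [simp]: "at_y0 (fps_const q) = fps_const (fps_nth q 0)"
  by (simp add: at_y0_def fps_eq_iff)

lemma at_x0_add [simp]: "at_x0 (a + b) = at_x0 a + at_x0 b" by (simp add: at_x0_def)
lemma at_x0_diff [simp]: "at_x0 (a - b) = at_x0 a - at_x0 b" by (simp add: at_x0_def)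
lemma at_x0_0 [simp]: "at_x0 0 = 0" by (simp add: at_x0_def)
lemma at_x0_1 [simp]: "at_x0 1 = 1" by (simp add: at_x0_def)
lemma at_x0_mult [simp]: "at_x0 (a * b) = at_x0 a * at_x0 b" by (simp add: at_x0_def)
lemma at_x0_power [simp]: "at_x0 (a ^ n) = at_x0 a ^ n" by (induct n) auto
lemma at_x0_sum [simp]: "at_x0 (sum f A) = (\<Sum>i\<in>A. at_x0 (f i))"
  by (induct A rule: infinite_finite_induct) auto
lemma at_x0_sc [simp]: "at_x0 (sc c) = fps_const c" by (simp add: at_x0_def sc_def)
lemma at_x0_vx [simp]: "at_x0 vx = 0" by (simp add: at_x0_def vx_def)
lemma at_x0_vy [simp]: "at_x0 vy = fps_X" by (simp add: at_x0_def vy_def)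
lemma at_x0_of_x [simp]: "at_x0 (of_x p) = fps_const (fps_nth p 0)" by (simp add: at_x0_def of_x_def)
lemma at_x0_fps_const [simp]: "at_x0 (fps_const q) = q" by (simp add: at_x0_def)

lemma at_y0_at_x0_nth_0: "fps_nth (at_y0 g) 0 = fps_nth (at_x0 g) 0"
  by (simp add: at_y0_def at_x0_def)

lemma at_y0_glue_axes [simp]: "fps_nth p 0 = fps_nth q 0 \<Longrightarrow> at_y0 (glue_axes p q) = p"
  by (simp add: glue_axes_def)

lemma at_x0_glue_axes [simp]: "fps_nth p 0 = fps_nth q 0 \<Longrightarrow> at_x0 (glue_axes p q) = q"
  by (simp add: glue_axes_def)

lemma xy_dvd_if_axes_eq_0:
  assumes "axes g = (0, 0)"
  shows "vx * vy dvd g"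
proof -
  define h :: ps where "h = Abs_fps (\<lambda>m. fps_shift 1 (fps_nth g (m + 1)))"
  have g0: "fps_nth g 0 = 0" and gm: "fps_nth (fps_nth g m) 0 = 0" for m
    using assms by (simp_all add: axes_def at_x0_def at_y0_def fps_eq_iff)
  have "g = vx * vy * h"
  proof (rule fps_ext)
    fix m
    show "fps_nth g m = fps_nth (vx * vy * h) m"
    proof (cases m)
      case 0
      then show ?thesis using g0 by (simp add: vx_def mult.assoc)
    next
      case (Suc m')
      have "fps_nth g m = fps_shift 1 (fps_nth g m) * fps_X"
      proof (cases "fps_nth g m = 0")
        case False
        then show ?thesis
          by (intro fps_shift_times_fps_X[symmetric] subdegree_geI) (use gm in auto)
      qed simp
      then show ?thesis using Suc
        by (simp add: vx_def vy_def h_def mult.assoc fps_X_mult_nth mult.commute)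
    qed
  qed
  then show ?thesis by (rule dvdI)
qed

lemma axes_eq_iff_xy_dvd: "axes g = axes g' \<longleftrightarrow> vx * vy dvd g - g'"
proof
  assume "axes g = axes g'"
  then show "vx * vy dvd g - g'"
    by (intro xy_dvd_if_axes_eq_0) (simp add: axes_def)
next
  assume "vx * vy dvd g - g'"
  then obtain h where "g = g' + vx * vy * h" by (metis dvdE add_diff_cancel_left' diff_add_cancel add.commute)
  then show "axes g = axes g'" by (simp add: axes_def)
qed

lemma nth_at_x0_eq_0_if_proper:
  assumes K: "is_ideal K" "1 \<notin> K" and g: "g \<in> K"
  shows "fps_nth (at_x0 g) 0 = 0"
proof (rule ccontr)
  assume "fps_nth (at_x0 g) 0 \<noteq> 0"
  then have "fps_nth g 0 * inverse (fps_nth g 0) = 1"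
    by (intro inverse_mult_eq_1') (simp add: at_x0_def)
  then obtain h where "g * h = 1" using fps_right_inverse by blast
  then show False using is_ideal_mult_right[OF K(1) g, of h] K(2) by simp
qed

section \<open>Colength\<close>

lemma eliminate_last_coefficient:
  fixes g h :: ps and f :: "nat \<Rightarrow> ps" and C D :: "nat \<Rightarrow> complex"
  assumes "r * D n = C n"
  shows "(g - sc r * h) - (\<Sum>i<n. sc (C i - r * D i) * f i) =
    (g - (\<Sum>i<Suc n. sc (C i) * f i)) - sc r * (h - (\<Sum>i<Suc n. sc (D i) * f i))"
proof -
  have last: "sc r * (sc (D n) * f n) = sc (C n) * f n"
    using assms by (simp add: mult.assoc[symmetric] sc_mult[symmetric])
  have "(\<Sum>i<n. sc (C i - r * D i) * f i) = (\<Sum>i<n. sc (C i) * f i) - sc r * (\<Sum>i<n. sc (D i) * f i)"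
    by (simp add: sc_diff sc_mult sum_subtractf sum_distrib_left left_diff_distrib mult.assoc)
  then show ?thesis
    unfolding sum.lessThan_Suc right_diff_distrib distrib_left last by simp
qed

lemma dependent_mod_ideal:
  fixes g f :: "nat \<Rightarrow> ps" and C :: "nat \<Rightarrow> nat \<Rightarrow> complex"
  assumes W: "is_ideal W"
  shows "finite A \<Longrightarrow> n < card A \<Longrightarrow> (\<forall>l\<in>A. g l - (\<Sum>i<n. sc (C l i) * f i) \<in> W) \<Longrightarrow>
     \<exists>c. (\<exists>l\<in>A. c l \<noteq> 0) \<and> (\<Sum>l\<in>A. sc (c l) * g l) \<in> W"
proof (induction n arbitrary: A g C)
  case 0
  then obtain l0 where l0: "l0 \<in> A" by fastforce
  define c :: "nat \<Rightarrow> complex" where "c = (\<lambda>l. if l = l0 then 1 else 0)"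
  have "(\<Sum>l\<in>A. sc (c l) * g l) = (\<Sum>l\<in>A. if l = l0 then g l else 0)"
    by (rule sum.cong) (auto simp: c_def)
  also have "\<dots> = g l0" using l0 0 by simp
  finally show ?case using 0 l0 by (intro exI[of _ c]) (auto simp: c_def)
next
  case (Suc n)
  show ?case
  proof (cases "\<forall>l\<in>A. C l n = 0")
    case True
    then show ?thesis using Suc by simp
  next
    case False
    \<comment> \<open>Gaussian elimination of the last coordinate \<open>f n\<close> using a vector \<open>g l0\<close> that involves it.\<close>
    then obtain l0 where l0: "l0 \<in> A" "C l0 n \<noteq> 0" by blast
    define lam where "lam l = C l n / C l0 n" for l
    define A' where "A' = A - {l0}"
    define g' where "g' l = g l - sc (lam l) * g l0" for l
    define C' where "C' l i = C l i - lam l * C l0 i" for l i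
    have "\<forall>l\<in>A'. g' l - (\<Sum>i<n. sc (C' l i) * f i) \<in> W"
    proof
      fix l assume "l \<in> A'"
      have lam: "lam l * C l0 n = C l n" using l0(2) by (simp add: lam_def)
      have "g l - (\<Sum>i<Suc n. sc (C l i) * f i) \<in> W" using Suc.prems(3) \<open>l \<in> A'\<close> by (simp add: A'_def)
      moreover have "g l0 - (\<Sum>i<Suc n. sc (C l0 i) * f i) \<in> W" using Suc.prems(3) l0(1) by blast
      ultimately show "g' l - (\<Sum>i<n. sc (C' l i) * f i) \<in> W"
        unfolding g'_def C'_def eliminate_last_coefficient[where C = "C l" and D = "C l0", OF lam]
        by (rule is_ideal_diff[OF W _ is_ideal_mult[OF W]])
    qed
    moreover have "finite A'" "n < card A'" using Suc.prems l0 by (auto simp: A'_def)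
    ultimately obtain c' where c': "\<exists>l\<in>A'. c' l \<noteq> 0" "(\<Sum>l\<in>A'. sc (c' l) * g' l) \<in> W"
      using Suc.IH by blast
    define c where "c l = (if l = l0 then - (\<Sum>l'\<in>A'. c' l' * lam l') else c' l)" for l
    have "(\<Sum>l\<in>A. sc (c l) * g l) = sc (c l0) * g l0 + (\<Sum>l\<in>A'. sc (c' l) * g l)"
      using Suc.prems(1) l0 by (simp add: A'_def sum.remove c_def)
    also have "\<dots> = (\<Sum>l\<in>A'. sc (c' l) * g' l)"
      by (simp add: c_def g'_def sc_uminus sc_sum sc_mult sum_distrib_right right_diff_distrib
          sum_subtractf mult.assoc)
    finally have "(\<Sum>l\<in>A. sc (c l) * g l) \<in> W" using c' by simp
    moreover have "\<exists>l\<in>A. c l \<noteq> 0" using c'(1) by (auto simp: c_def A'_def)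
    ultimately show ?thesis by blast
  qed
qed

lemma independent_le_colength:
  assumes W: "is_ideal W" and cl: "colength W n"
    and ind: "\<forall>c. (\<Sum>l<m. sc (c l) * g l) \<in> W \<longrightarrow> (\<forall>l<m. c l = 0)"
  shows "m \<le> n"
proof (rule ccontr)
  assume "\<not> m \<le> n"
  then have mn: "n < card {..<m}" by simp
  obtain f where "\<forall>g. \<exists>c. g - (\<Sum>i<n. sc (c i) * f i) \<in> W"
    using cl unfolding colength_def by blast
  then have "\<forall>l. \<exists>c. g l - (\<Sum>i<n. sc (c i) * f i) \<in> W" by blast
  then obtain C where "\<forall>l. g l - (\<Sum>i<n. sc (C l i) * f i) \<in> W" by (rule choice[THEN exE])
  from dependent_mod_ideal[OF W _ mn] this
  obtain c where "\<exists>l\<in>{..<m}. c l \<noteq> 0" "(\<Sum>l<m. sc (c l) * g l) \<in> W"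
    by blast
  then show False using ind by auto
qed

lemma colength_unique:
  assumes W: "is_ideal W" and "colength W n" "colength W m"
  shows "n = m"
proof -
  obtain f where "\<forall>c. (\<Sum>i<n. sc (c i) * f i) \<in> W \<longrightarrow> (\<forall>i<n. c i = 0)"
    using assms(2) unfolding colength_def by blast
  from independent_le_colength[OF W assms(3) this] have "n \<le> m" .
  moreover obtain g where "\<forall>c. (\<Sum>i<m. sc (c i) * g i) \<in> W \<longrightarrow> (\<forall>i<m. c i = 0)"
    using assms(3) unfolding colength_def by blast
  from independent_le_colength[OF W assms(2) this] have "m \<le> n" .
  ultimately show ?thesis by simp
qed

lemma colength_UNIV: "colength UNIV 0"
  by (simp add: colength_def)

lemma sum_lessThan_add:
  fixes h :: "nat \<Rightarrow> 'a::comm_monoid_add"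
  shows "(\<Sum>i<a + d. h i) = (\<Sum>i<a. h i) + (\<Sum>l<d. h (a + l))"
  by (induct d) (simp_all add: add.assoc)

lemma colength_add_basis:
  assumes W: "is_ideal W" and W': "is_ideal W'" and sub: "W \<subseteq> W'"
    and cl: "colength W' a"
    and gin: "\<forall>l<d. g l \<in> W'"
    and span: "\<forall>w\<in>W'. \<exists>c. w - (\<Sum>l<d. sc (c l) * g l) \<in> W"
    and ind: "\<forall>c. (\<Sum>l<d. sc (c l) * g l) \<in> W \<longrightarrow> (\<forall>l<d. c l = 0)"
  shows "colength W (a + d)"
proof -
  obtain f where fspan: "\<forall>h. \<exists>c. h - (\<Sum>i<a. sc (c i) * f i) \<in> W'"
    and find: "\<forall>c. (\<Sum>i<a. sc (c i) * f i) \<in> W' \<longrightarrow> (\<forall>i<a. c i = 0)"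
    using cl unfolding colength_def by blast
  define F where "F i = (if i < a then f i else g (i - a))" for i
  have split: "(\<Sum>i<a + d. sc (c i) * F i) =
      (\<Sum>i<a. sc (c i) * f i) + (\<Sum>l<d. sc (c (a + l)) * g l)" for c
    unfolding sum_lessThan_add by (simp add: F_def)
  show ?thesis unfolding colength_def
  proof (intro exI[of _ F] conjI allI impI)
    fix h
    obtain c1 where "h - (\<Sum>i<a. sc (c1 i) * f i) \<in> W'" using fspan by blast
    then obtain c2 where c2: "h - (\<Sum>i<a. sc (c1 i) * f i) - (\<Sum>l<d. sc (c2 l) * g l) \<in> W"
      using span by blast
    define c where "c i = (if i < a then c1 i else c2 (i - a))" for i
    have "(\<Sum>i<a + d. sc (c i) * F i) = (\<Sum>i<a. sc (c1 i) * f i) + (\<Sum>l<d. sc (c2 l) * g l)"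
      unfolding split by (simp add: c_def)
    then show "\<exists>c. h - (\<Sum>i<a + d. sc (c i) * F i) \<in> W"
      using c2 by (intro exI[of _ c]) (simp add: algebra_simps)
  next
    fix c i assume H: "(\<Sum>i<a + d. sc (c i) * F i) \<in> W" and i: "i < a + d"
    have G: "(\<Sum>l<d. sc (c (a + l)) * g l) \<in> W'"
      using gin by (intro is_ideal_sum[OF W'] is_ideal_mult[OF W']) auto
    have "(\<Sum>i<a. sc (c i) * f i) + (\<Sum>l<d. sc (c (a + l)) * g l) \<in> W'"
      using H sub split by auto
    then have "(\<Sum>i<a. sc (c i) * f i) \<in> W'"
      using is_ideal_diff[OF W' _ G] by fastforce
    then have z1: "\<forall>i<a. c i = 0" using find by blast
    then have "(\<Sum>l<d. sc (c (a + l)) * g l) \<in> W" using H split by simp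
    then have z2: "\<forall>l<d. c (a + l) = 0" using ind[rule_format, of "\<lambda>l. c (a + l)"] by blast
    show "c i = 0"
      using z1 z2[rule_format, of "i - a"] i by (cases "i < a") auto
  qed
qed

lemma colength_add_colon:
  assumes W: "is_ideal W"
    and sum: "colength (ideal_sum W (principal m)) a"
    and col: "colength (colon W m) d"
  shows "colength W (a + d)"
proof -
  obtain b where bspan: "\<forall>t. \<exists>c. t - (\<Sum>l<d. sc (c l) * b l) \<in> colon W m"
    and bind: "\<forall>c. (\<Sum>l<d. sc (c l) * b l) \<in> colon W m \<longrightarrow> (\<forall>l<d. c l = 0)"
    using col unfolding colength_def by blast
  have factor: "(\<Sum>l<d. sc (c l) * (m * b l)) = m * (\<Sum>l<d. sc (c l) * b l)" for c
    by (simp add: sum_distrib_left mult.left_commute)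
  show ?thesis
  proof (rule colength_add_basis[OF W is_ideal_ideal_sum[OF W is_ideal_principal] _ sum])
    show "W \<subseteq> ideal_sum W (principal m)"
    proof
      fix w assume "w \<in> W"
      moreover have "w = w + m * 0" by simp
      ultimately show "w \<in> ideal_sum W (principal m)"
        unfolding mem_ideal_sum mem_principal by blast
    qed
    show "\<forall>l<d. m * b l \<in> ideal_sum W (principal m)"
      unfolding mem_ideal_sum mem_principal using is_ideal_zero[OF W] by force
    show "\<forall>w\<in>ideal_sum W (principal m). \<exists>c. w - (\<Sum>l<d. sc (c l) * (m * b l)) \<in> W"
    proof
      fix w assume "w \<in> ideal_sum W (principal m)"
      then obtain w0 t where w: "w = w0 + m * t" "w0 \<in> W"
        unfolding mem_ideal_sum mem_principal by blast
      obtain c where "m * (t - (\<Sum>l<d. sc (c l) * b l)) \<in> W"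
        using bspan unfolding colon_def by blast
      then have "w0 + m * (t - (\<Sum>l<d. sc (c l) * b l)) \<in> W"
        using is_ideal_add[OF W w(2)] by blast
      then show "\<exists>c. w - (\<Sum>l<d. sc (c l) * (m * b l)) \<in> W"
        by (intro exI[of _ c]) (simp add: w factor right_diff_distrib add_diff_eq)
    qed
    show "\<forall>c. (\<Sum>l<d. sc (c l) * (m * b l)) \<in> W \<longrightarrow> (\<forall>l<d. c l = 0)"
      using bind unfolding factor colon_def by blast
  qed
qed

lemma colength_by_coordinates:
  fixes \<Phi> :: "ps \<Rightarrow> nat \<Rightarrow> complex"
  assumes add: "\<And>g h l. l < d \<Longrightarrow> \<Phi> (g + h) l = \<Phi> g l + \<Phi> h l"
    and scale: "\<And>c g l. l < d \<Longrightarrow> \<Phi> (sc c * g) l = c * \<Phi> g l"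
    and dual: "\<And>l. l < d \<Longrightarrow> \<exists>b. \<forall>l'<d. \<Phi> b l' = (if l' = l then 1 else 0)"
    and kernel: "\<And>g. g \<in> W \<longleftrightarrow> (\<forall>l<d. \<Phi> g l = 0)"
  shows "colength W d"
proof -
  have zero: "\<Phi> 0 l = 0" if "l < d" for l
    using add[OF that, of 0 0] by simp
  have sum: "\<Phi> (sum h A) l = (\<Sum>i\<in>A. \<Phi> (h i) l)" if "l < d" for h and A :: "nat set" and l
    by (induct A rule: infinite_finite_induct) (auto simp: zero add that)
  have diff: "\<Phi> (g - h) l = \<Phi> g l - \<Phi> h l" if "l < d" for g h l
    using add[OF that, of "g - h" h] by simp
  obtain b where b: "\<forall>l<d. \<forall>l'<d. \<Phi> (b l) l' = (if l' = l then 1 else 0)"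
    using dual by metis
  have coord: "\<Phi> (\<Sum>i<d. sc (c i) * b i) l = c l" if "l < d" for c l
  proof -
    have "\<Phi> (\<Sum>i<d. sc (c i) * b i) l = (\<Sum>i<d. c i * (if l = i then 1 else 0))"
      using that b by (simp add: sum scale)
    also have "\<dots> = c l" using that by (simp add: if_distrib cong: if_cong)
    finally show ?thesis .
  qed
  show ?thesis unfolding colength_def
  proof (intro exI[of _ b] conjI allI impI)
    fix g
    show "\<exists>c. g - (\<Sum>i<d. sc (c i) * b i) \<in> W"
      by (intro exI[of _ "\<Phi> g"]) (simp add: kernel diff coord)
  next
    fix c i assume "(\<Sum>i<d. sc (c i) * b i) \<in> W" "i < d"
    then show "c i = 0" using coord kernel by metis
  qed
qed

section \<open>Ideals of the ring of pairs\<close>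

text \<open>A proper ideal of the ring \<open>{(p, q). p(0) = q(0)} \<cong> \<complex>[[x,y]]/(xy)\<close>.\<close>

definition pair_ideal :: "(complex fps \<times> complex fps) set \<Rightarrow> bool" where
  "pair_ideal P \<longleftrightarrow> (\<forall>(p, q)\<in>P. fps_nth p 0 = 0 \<and> fps_nth q 0 = 0) \<and>
     (\<forall>(p, q)\<in>P. \<forall>(p', q')\<in>P. (p + p', q + q') \<in> P) \<and>
     (\<forall>(p, q)\<in>P. \<forall>a b. fps_nth a 0 = fps_nth b 0 \<longrightarrow> (a * p, b * q) \<in> P)"

definition pair_principal :: "complex fps \<Rightarrow> complex fps \<Rightarrow> (complex fps \<times> complex fps) set" where
  "pair_principal p q = {(r * p, s * q) | r s. fps_nth r 0 = fps_nth s 0}"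

definition pair_monomial :: "nat \<Rightarrow> nat \<Rightarrow> (complex fps \<times> complex fps) set" where
  "pair_monomial i j = {(p, q). fps_X ^ i dvd p \<and> fps_X ^ j dvd q}"

lemma pair_ideal_nth_0: "pair_ideal P \<Longrightarrow> (p, q) \<in> P \<Longrightarrow> fps_nth p 0 = 0"
  unfolding pair_ideal_def by blast

lemma pair_ideal_add: "pair_ideal P \<Longrightarrow> (p, q) \<in> P \<Longrightarrow> (p', q') \<in> P \<Longrightarrow> (p + p', q + q') \<in> P"
  unfolding pair_ideal_def by blast

lemma pair_ideal_mult:
  "pair_ideal P \<Longrightarrow> (p, q) \<in> P \<Longrightarrow> fps_nth a 0 = fps_nth b 0 \<Longrightarrow> (a * p, b * q) \<in> P"
  unfolding pair_ideal_def by blast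

lemma pair_ideal_diff: "pair_ideal P \<Longrightarrow> (p, q) \<in> P \<Longrightarrow> (p', q') \<in> P \<Longrightarrow> (p - p', q - q') \<in> P"
  using pair_ideal_add[of P p q "-1 * p'" "-1 * q'"] pair_ideal_mult[of P p' q' "-1" "-1"] by simp

lemma pair_ideal_swap: "pair_ideal P \<Longrightarrow> pair_ideal (prod.swap ` P)"
  unfolding pair_ideal_def by force

lemma pair_principal_subset: "pair_ideal P \<Longrightarrow> (p, q) \<in> P \<Longrightarrow> pair_principal p q \<subseteq> P"
  unfolding pair_principal_def using pair_ideal_mult by blast

lemma pair_ideal_least_x_order:
  assumes P: "pair_ideal P" and p0: "(p0, q0) \<in> P" "p0 \<noteq> 0"
  obtains i q where "1 \<le> i" "(fps_X ^ i, q) \<in> P" "\<forall>(p, q)\<in>P. fps_X ^ i dvd p"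
proof -
  define S where "S = {subdegree p | p q. (p, q) \<in> P \<and> p \<noteq> 0}"
  define i where "i = (LEAST n. n \<in> S)"
  have "subdegree p0 \<in> S" using p0 by (auto simp: S_def)
  then have "i \<in> S" unfolding i_def by (rule LeastI)
  then obtain p1 q1 where p1: "(p1, q1) \<in> P" "p1 \<noteq> 0" "subdegree p1 = i"
    by (auto simp: S_def)
  have dvd: "\<forall>(p, q)\<in>P. fps_X ^ i dvd p"
  proof (clarify)
    fix p q assume "(p, q) \<in> P"
    then have "p \<noteq> 0 \<Longrightarrow> i \<le> subdegree p"
      unfolding i_def by (intro Least_le) (auto simp: S_def)
    then show "fps_X ^ i dvd p"
    proof (cases "p = 0")
      case False
      then have "p = fps_shift i p * fps_X ^ i"
        using \<open>p \<noteq> 0 \<Longrightarrow> i \<le> subdegree p\<close> by (intro subdegree_decompose')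
      then show ?thesis by (metis dvd_triv_right)
    qed simp
  qed
  define u where "u = fps_shift i p1"
  have p1u: "p1 = fps_X ^ i * u" using p1 subdegree_decompose[of p1] by (simp add: u_def mult.commute)
  have u0: "fps_nth u 0 \<noteq> 0" using p1 nth_subdegree_nonzero[of p1] by (simp add: u_def)
  have "1 \<le> i" using pair_ideal_nth_0[OF P p1(1)] p1 by (metis less_one not_less subdegree_eq_0_iff)
  moreover have "(inverse u * p1, fps_const (fps_nth (inverse u) 0) * q1) \<in> P"
    by (rule pair_ideal_mult[OF P p1(1)]) simp
  moreover have "inverse u * p1 = fps_X ^ i"
    using inverse_mult_eq_1[OF u0] by (simp add: p1u mult.left_commute)
  ultimately show ?thesis using dvd that by auto
qed

lemma pair_ideal_y_unit:
  assumes P: "pair_ideal P" and h: "(0, fps_X ^ j * z) \<in> P" and z: "fps_nth z 0 \<noteq> 0"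
  shows "(0, fps_X ^ j) \<in> P"
proof -
  have "(fps_const (fps_nth (inverse z) 0) * 0, inverse z * (fps_X ^ j * z)) \<in> P"
    by (rule pair_ideal_mult[OF P h]) simp
  moreover have "inverse z * (fps_X ^ j * z) = fps_X ^ j"
    using inverse_mult_eq_1[OF z] by (simp add: mult.left_commute)
  ultimately show ?thesis by simp
qed

lemma pair_monomial_subset:
  assumes P: "pair_ideal P" and x: "(fps_X ^ i, 0) \<in> P" and y: "(0, fps_X ^ j) \<in> P"
  shows "pair_monomial i j \<subseteq> P"
proof (clarsimp simp: pair_monomial_def elim!: dvdE)
  fix s t
  have "(s * fps_X ^ i, fps_const (fps_nth s 0) * 0) \<in> P"
    by (rule pair_ideal_mult[OF P x]) simp
  moreover have "(fps_const (fps_nth t 0) * 0, t * fps_X ^ j) \<in> P"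
    by (rule pair_ideal_mult[OF P y]) simp
  ultimately show "(fps_X ^ i * s, fps_X ^ j * t) \<in> P"
    using pair_ideal_add[OF P] by (fastforce simp: mult.commute)
qed

lemma pair_ideal_subset_principal:
  assumes P: "pair_ideal P" and gen: "(fps_X ^ i, fps_const b * fps_X ^ j) \<in> P" and b: "b \<noteq> 0"
    and no_y: "(0, fps_X ^ j) \<notin> P" and sub: "P \<subseteq> pair_monomial i j"
  shows "P \<subseteq> pair_principal (fps_X ^ i) (fps_const b * fps_X ^ j)"
proof (clarify)
  fix p q assume pq: "(p, q) \<in> P"
  then obtain s t where st: "p = fps_X ^ i * s" "q = fps_X ^ j * t"
    using sub by (auto simp: pair_monomial_def elim!: dvdE)
  have "(s * fps_X ^ i, fps_const (fps_nth s 0) * (fps_const b * fps_X ^ j)) \<in> P"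
    by (rule pair_ideal_mult[OF P gen]) simp
  from pair_ideal_diff[OF P pq this]
  have "(0, fps_X ^ j * (t - fps_const (fps_nth s 0 * b))) \<in> P"
    by (simp add: st algebra_simps flip: fps_const_mult)
  then have "fps_nth t 0 = fps_nth s 0 * b"
    using pair_ideal_y_unit[OF P] no_y by fastforce
  then have "fps_nth s 0 = fps_nth (fps_const (inverse b) * t) 0"
    using b by simp
  moreover have "q = (fps_const (inverse b) * t) * (fps_const b * fps_X ^ j)"
    using b by (simp add: st mult_ac fps_const_mult[symmetric])
  ultimately show "(p, q) \<in> pair_principal (fps_X ^ i) (fps_const b * fps_X ^ j)"
    unfolding pair_principal_def using st(1) by (fastforce simp: mult.commute)
qed

lemma pair_ideal_normalized_generator:
  assumes P: "pair_ideal P" and x: "(fps_X ^ i, fps_X ^ j * w) \<in> P"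
    and y: "(fps_X ^ i * s, fps_X ^ j) \<in> P" and no_y: "(0, fps_X ^ j) \<notin> P"
  shows "fps_nth w 0 \<noteq> 0 \<and> (fps_X ^ i, fps_const (fps_nth w 0) * fps_X ^ j) \<in> P"
proof -
  have "(s * fps_X ^ i, fps_const (fps_nth s 0) * (fps_X ^ j * w)) \<in> P"
    by (rule pair_ideal_mult[OF P x]) simp
  from pair_ideal_diff[OF P y this]
  have "(0, fps_X ^ j * (1 - fps_const (fps_nth s 0) * w)) \<in> P"
    by (simp add: algebra_simps)
  then have "fps_nth s 0 * fps_nth w 0 = 1"
    using pair_ideal_y_unit[OF P] no_y by fastforce
  then have w0: "fps_nth w 0 \<noteq> 0" by auto
  have "(1 * fps_X ^ i, (fps_const (fps_nth w 0) * inverse w) * (fps_X ^ j * w)) \<in> P"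
    by (rule pair_ideal_mult[OF P x]) (use w0 in simp)
  moreover have "(fps_const (fps_nth w 0) * inverse w) * (fps_X ^ j * w) = fps_const (fps_nth w 0) * fps_X ^ j"
    using w0 by (simp add: mult_ac inverse_mult_eq_1')
  ultimately show ?thesis using w0 by simp
qed

lemma pair_ideal_classification:
  assumes P: "pair_ideal P" and x: "(p0, 0) \<in> P" "p0 \<noteq> 0" and y: "(0, q0) \<in> P" "q0 \<noteq> 0"
  obtains (principal) i j a b where "1 \<le> i" "1 \<le> j" "a \<noteq> 0" "b \<noteq> 0"
      "P = pair_principal (fps_const a * fps_X ^ i) (fps_const b * fps_X ^ j)"
  | (monomial) i j where "1 \<le> i" "1 \<le> j" "P = pair_monomial i j"
proof -
  obtain i q1 where i: "1 \<le> i" "(fps_X ^ i, q1) \<in> P" and dx: "\<forall>(p, q)\<in>P. fps_X ^ i dvd p"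
    using pair_ideal_least_x_order[OF P x] .
  have "(q0, 0) \<in> prod.swap ` P" using y(1) by force
  then obtain j p2 where j: "1 \<le> j" "(fps_X ^ j, p2) \<in> prod.swap ` P"
    and dy: "\<forall>(q, p)\<in>prod.swap ` P. fps_X ^ j dvd q"
    using pair_ideal_least_x_order[OF pair_ideal_swap[OF P] _ y(2)] by blast
  then have j: "1 \<le> j" "(p2, fps_X ^ j) \<in> P" and dy: "\<forall>(p, q)\<in>P. fps_X ^ j dvd q"
    by auto
  have sub: "P \<subseteq> pair_monomial i j"
    using dx dy by (auto simp: pair_monomial_def)
  obtain w where w: "q1 = fps_X ^ j * w"
    using dy i(2) by (auto elim!: dvdE)
  show ?thesis
  proof (cases "(0, fps_X ^ j) \<in> P")
    case True
    have "(fps_const (fps_nth w 0) * 0, w * fps_X ^ j) \<in> P"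
      by (rule pair_ideal_mult[OF P True]) simp
    from pair_ideal_diff[OF P i(2) this] have "(fps_X ^ i, 0) \<in> P"
      by (simp add: w mult.commute)
    then have "P = pair_monomial i j"
      using sub pair_monomial_subset[OF P _ True] by blast
    then show ?thesis using monomial i(1) j(1) by blast
  next
    case False
    obtain s where "p2 = fps_X ^ i * s"
      using dx j(2) by (auto elim!: dvdE)
    then obtain b where b: "b \<noteq> 0" and gen: "(fps_X ^ i, fps_const b * fps_X ^ j) \<in> P"
      using pair_ideal_normalized_generator[OF P i(2)[unfolded w]] j(2) False by blast
    have "P = pair_principal (fps_const 1 * fps_X ^ i) (fps_const b * fps_X ^ j)"
      using pair_ideal_subset_principal[OF P gen b False sub] pair_principal_subset[OF P gen] by simp
    then show ?thesis using principal[OF i(1) j(1) one_neq_zero b] by blast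
  qed
qed

section \<open>The layers \<open>J\<^sup>k\<close> and their types\<close>

lemma pair_ideal_axes_image:
  assumes K: "is_ideal K" "1 \<notin> K"
  shows "pair_ideal (axes ` K)"
proof -
  have zero: "fps_nth (at_y0 g) 0 = 0 \<and> fps_nth (at_x0 g) 0 = 0" if "g \<in> K" for g
    using nth_at_x0_eq_0_if_proper[OF K that] at_y0_at_x0_nth_0[of g] by simp
  have add: "(at_y0 g + at_y0 h, at_x0 g + at_x0 h) \<in> axes ` K" if "g \<in> K" "h \<in> K" for g h
    by (rule image_eqI[of _ _ "g + h"]) (simp_all add: axes_def is_ideal_add[OF K(1) that])
  have mult: "(a * at_y0 g, b * at_x0 g) \<in> axes ` K"
    if "g \<in> K" "fps_nth a 0 = fps_nth b 0" for g a b
    by (rule image_eqI[of _ _ "glue_axes a b * g"]) (simp_all add: axes_def that is_ideal_mult[OF K(1)])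
  show ?thesis
    using zero add mult unfolding pair_ideal_def axes_def by auto
qed

lemma colength_powers_dependent:
  assumes "is_ideal I" "colength I n"
  obtains c l0 where "l0 \<le> n" "c l0 \<noteq> 0" "(\<Sum>l\<le>n. sc (c l) * z ^ l) \<in> I"
  using independent_le_colength[OF assms, where m = "Suc n" and g = "\<lambda>l. z ^ l"] that
  by (auto simp: lessThan_Suc_atMost less_Suc_eq_le)

lemma nth_sum_monomials:
  "fps_nth (\<Sum>l\<le>n. fps_const (c l) * fps_X ^ l) r = (if r \<le> n then c r else (0::complex))"
  by (simp add: fps_sum_nth if_distrib cong: if_cong)

lemma axes_image_pure_x:
  assumes K: "is_ideal K" "1 \<notin> K" and I: "is_ideal I" "colength I n" "I \<subseteq> K"
  shows "\<exists>p. p \<noteq> 0 \<and> (p, 0) \<in> axes ` K"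
proof -
  obtain c l0 where l0: "l0 \<le> n" "c l0 \<noteq> 0" and G: "(\<Sum>l\<le>n. sc (c l) * vx ^ l) \<in> I"
    using colength_powers_dependent[OF I(1,2)] .
  define G where "G = (\<Sum>l\<le>n. sc (c l) * vx ^ l)"
  have GK: "G \<in> K" using G I(3) by (auto simp: G_def)
  have "at_x0 G = fps_const (c 0)"
    by (simp add: G_def power_0_left if_distrib sum.delta cong: if_cong)
  moreover have "fps_nth (at_x0 G) 0 = 0"
    using nth_at_x0_eq_0_if_proper[OF K GK] .
  ultimately have "at_x0 G = 0" by simp
  moreover have "fps_nth (at_y0 G) l0 \<noteq> 0"
    using l0 by (simp add: G_def nth_sum_monomials)
  ultimately show ?thesis
    using GK by (intro exI[of _ "at_y0 G"]) (force simp: axes_def)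
qed

lemma axes_image_pure_y:
  assumes K: "is_ideal K" "1 \<notin> K" and I: "is_ideal I" "colength I n" "I \<subseteq> K"
  shows "\<exists>q. q \<noteq> 0 \<and> (0, q) \<in> axes ` K"
proof -
  obtain c l0 where l0: "l0 \<le> n" "c l0 \<noteq> 0" and G: "(\<Sum>l\<le>n. sc (c l) * vy ^ l) \<in> I"
    using colength_powers_dependent[OF I(1,2)] .
  define G where "G = (\<Sum>l\<le>n. sc (c l) * vy ^ l)"
  have GK: "G \<in> K" using G I(3) by (auto simp: G_def)
  have "at_y0 G = fps_const (c 0)"
    by (simp add: G_def power_0_left if_distrib sum.delta cong: if_cong)
  moreover have "fps_nth (at_y0 G) 0 = 0"
    using nth_at_x0_eq_0_if_proper[OF K GK] at_y0_at_x0_nth_0[of G] by simp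
  ultimately have "at_y0 G = 0" by simp
  moreover have "fps_nth (at_x0 G) l0 \<noteq> 0"
    using l0 by (simp add: G_def nth_sum_monomials)
  ultimately show ?thesis
    using GK by (intro exI[of _ "at_x0 G"]) (force simp: axes_def)
qed

lemma axes_colon_eq_if_Jk_eq:
  assumes S: "S \<subseteq> Jk I k" and J: "Jk I k = ideal_sum (Jk I (Suc k)) S"
  shows "axes ` colon I (vx ^ k * vy ^ k) = axes ` {s. vx ^ k * vy ^ k * s \<in> S}"
proof (intro subset_antisym image_subsetI)
  let ?m = "vx ^ k * vy ^ k"
  fix g assume "g \<in> colon I ?m"
  then have "?m * g \<in> ideal_sum (Jk I (Suc k)) S"
    unfolding J[symmetric] mem_Jk colon_def by blast
  then obtain h s where gs: "?m * g = vx ^ Suc k * vy ^ Suc k * h + s" and s: "s \<in> S"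
    unfolding mem_ideal_sum mem_Jk by blast
  have "s \<in> Jk I k" using S s by blast
  then obtain s' where s': "s = ?m * s'" by (auto simp: mem_Jk)
  have "g = vx * vy * h + s'"
    using gs unfolding s' xy_pow_Suc by (simp add: mult.assoc flip: distrib_left)
  then have "axes g = axes s'" by (simp add: axes_def)
  then show "axes g \<in> axes ` {s. ?m * s \<in> S}" using s s' by blast
next
  fix s assume "s \<in> {s. vx ^ k * vy ^ k * s \<in> S}"
  then show "axes s \<in> axes ` colon I (vx ^ k * vy ^ k)" using S by (auto simp: colon_def mem_Jk)
qed

lemma Jk_eq_if_axes_colon_eq:
  assumes I: "is_ideal I" and S: "S \<subseteq> Jk I k"
    and A: "axes ` colon I (vx ^ k * vy ^ k) = axes ` {s. vx ^ k * vy ^ k * s \<in> S}"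
  shows "Jk I k = ideal_sum (Jk I (Suc k)) S"
proof (intro subset_antisym subsetI)
  let ?m = "vx ^ k * vy ^ k"
  fix g assume "g \<in> Jk I k"
  then obtain \<kappa> where g: "g \<in> I" "g = ?m * \<kappa>" by (auto simp: mem_Jk)
  then have "axes \<kappa> \<in> axes ` {s. ?m * s \<in> S}" unfolding A[symmetric] colon_def by blast
  then obtain s where s: "?m * s \<in> S" "axes \<kappa> = axes s" by blast
  then obtain h where "\<kappa> - s = vx * vy * h" by (auto simp: axes_eq_iff_xy_dvd elim: dvdE)
  then have gs: "g = vx ^ Suc k * vy ^ Suc k * h + ?m * s"
    by (simp add: g xy_pow_Suc algebra_simps)
  have "?m * s \<in> I" using S s(1) by (auto simp: mem_Jk)
  then have "vx ^ Suc k * vy ^ Suc k * h \<in> I"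
    using is_ideal_diff[OF I g(1)] gs by force
  then have "vx ^ Suc k * vy ^ Suc k * h \<in> Jk I (Suc k)" by (auto simp: mem_Jk)
  then show "g \<in> ideal_sum (Jk I (Suc k)) S"
    unfolding mem_ideal_sum using gs s(1) by blast
next
  fix g assume "g \<in> ideal_sum (Jk I (Suc k)) S"
  then show "g \<in> Jk I k"
    using Jk_Suc_subset S is_ideal_add[OF is_ideal_Jk[OF I]] unfolding mem_ideal_sum by blast
qed

lemma Jk_eq_ideal_sum_iff:
  assumes "is_ideal I" "S \<subseteq> Jk I k"
  shows "Jk I k = ideal_sum (Jk I (Suc k)) S \<longleftrightarrow>
    axes ` colon I (vx ^ k * vy ^ k) = axes ` {s. vx ^ k * vy ^ k * s \<in> S}"
  using axes_colon_eq_if_Jk_eq[OF assms(2)] Jk_eq_if_axes_colon_eq[OF assms] by blast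

lemma axes_image_multiples: "axes ` range (\<lambda>r. r * e) = pair_principal (at_y0 e) (at_x0 e)"
proof (intro subset_antisym image_subsetI subsetI)
  fix g assume "g \<in> range (\<lambda>r. r * e)"
  then obtain r where "g = r * e" by blast
  then show "axes g \<in> pair_principal (at_y0 e) (at_x0 e)"
    unfolding pair_principal_def axes_def using at_y0_at_x0_nth_0[of r] by auto
next
  fix pq assume "pq \<in> pair_principal (at_y0 e) (at_x0 e)"
  then obtain r s where "pq = (r * at_y0 e, s * at_x0 e)" "fps_nth r 0 = fps_nth s 0"
    unfolding pair_principal_def by blast
  then have "pq = axes (glue_axes r s * e)" by (simp add: axes_def)
  then show "pq \<in> axes ` range (\<lambda>r. r * e)" by blast
qed

lemma axes_image_combinations:
  assumes "axes e1 = (fps_X ^ i, 0)" "axes e2 = (0, fps_X ^ j)"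
  shows "axes ` {g1 * e1 + g2 * e2 | g1 g2. True} = pair_monomial i j"
proof (intro subset_antisym subsetI)
  fix pq assume "pq \<in> axes ` {g1 * e1 + g2 * e2 | g1 g2. True}"
  then obtain g1 g2 where "pq = axes (g1 * e1 + g2 * e2)" by blast
  then show "pq \<in> pair_monomial i j"
    using assms by (simp add: axes_def pair_monomial_def)
next
  fix pq assume "pq \<in> pair_monomial i j"
  then obtain s t where "pq = (fps_X ^ i * s, fps_X ^ j * t)"
    by (auto simp: pair_monomial_def elim!: dvdE)
  then have "pq = axes (of_x s * e1 + fps_const t * e2)"
    using assms by (simp add: axes_def mult.commute)
  then show "pq \<in> axes ` {g1 * e1 + g2 * e2 | g1 g2. True}" by blast
qed

lemma xy_pow_mult_principal_iff:
  "{s. vx ^ k * vy ^ k * s \<in> principal (vx ^ k * vy ^ k * e)} = range (\<lambda>r. r * e)"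
  by (auto simp: mem_principal mult.assoc mult.commute)

lemma xy_pow_mult_ideal2_iff:
  "{s. vx ^ k * vy ^ k * s \<in> ideal2 (vx ^ k * vy ^ k * e1) (vx ^ k * vy ^ k * e2)} =
   {g1 * e1 + g2 * e2 | g1 g2. True}"
proof -
  have "g1 * (vx ^ k * vy ^ k * e1) + g2 * (vx ^ k * vy ^ k * e2) = vx ^ k * vy ^ k * (g1 * e1 + g2 * e2)"
    for g1 g2 by (simp add: algebra_simps)
  then show ?thesis by (auto simp: mem_ideal2)
qed

lemma Jk_principal_decomposition_iff:
  assumes I: "is_ideal I"
  shows "(vx ^ k * vy ^ k * e \<in> Jk I k \<and>
      Jk I k = ideal_sum (Jk I (Suc k)) (principal (vx ^ k * vy ^ k * e))) \<longleftrightarrow>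
    e \<in> colon I (vx ^ k * vy ^ k) \<and> axes ` colon I (vx ^ k * vy ^ k) = pair_principal (at_y0 e) (at_x0 e)"
proof -
  let ?m = "vx ^ k * vy ^ k"
  have "?m * e \<in> Jk I k \<longleftrightarrow> e \<in> colon I ?m" by (auto simp: mem_Jk colon_def)
  moreover have "Jk I k = ideal_sum (Jk I (Suc k)) (principal (?m * e)) \<longleftrightarrow>
      axes ` colon I ?m = pair_principal (at_y0 e) (at_x0 e)" if "?m * e \<in> Jk I k"
    using Jk_eq_ideal_sum_iff[OF I principal_subset[OF is_ideal_Jk[OF I] that]]
    unfolding xy_pow_mult_principal_iff axes_image_multiples .
  ultimately show ?thesis by blast
qed

lemma Jk_monomial_decomposition_iff:
  assumes I: "is_ideal I" and e: "axes e1 = (fps_X ^ i, 0)" "axes e2 = (0, fps_X ^ j)"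
  shows "(vx ^ k * vy ^ k * e1 \<in> Jk I k \<and> vx ^ k * vy ^ k * e2 \<in> Jk I k \<and>
      Jk I k = ideal_sum (Jk I (Suc k)) (ideal2 (vx ^ k * vy ^ k * e1) (vx ^ k * vy ^ k * e2))) \<longleftrightarrow>
    e1 \<in> colon I (vx ^ k * vy ^ k) \<and> e2 \<in> colon I (vx ^ k * vy ^ k) \<and>
    axes ` colon I (vx ^ k * vy ^ k) = pair_monomial i j"
proof -
  let ?m = "vx ^ k * vy ^ k"
  have "?m * e \<in> Jk I k \<longleftrightarrow> e \<in> colon I ?m" for e by (auto simp: mem_Jk colon_def)
  moreover have "Jk I k = ideal_sum (Jk I (Suc k)) (ideal2 (?m * e1) (?m * e2)) \<longleftrightarrow>
      axes ` colon I ?m = pair_monomial i j" if "?m * e1 \<in> Jk I k" "?m * e2 \<in> Jk I k"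
    using Jk_eq_ideal_sum_iff[OF I ideal2_subset[OF is_ideal_Jk[OF I] that]]
    unfolding xy_pow_mult_ideal2_iff axes_image_combinations[OF e] .
  ultimately show ?thesis by blast
qed

lemma type1_iff_axes_image:
  assumes I: "is_ideal I"
  shows "type1 I k i j \<longleftrightarrow> 1 \<le> i \<and> 1 \<le> j \<and> (\<exists>a b. a \<noteq> 0 \<and> b \<noteq> 0 \<and>
    axes ` colon I (vx ^ k * vy ^ k) = pair_principal (fps_const a * fps_X ^ i) (fps_const b * fps_X ^ j))"
proof -
  let ?m = "vx ^ k * vy ^ k"
  note generator = Jk_principal_decomposition_iff[OF I]
  have E: "?m * (sc a * vx ^ i + sc b * vy ^ j) + vx ^ Suc k * vy ^ Suc k * h =
      ?m * (sc a * vx ^ i + sc b * vy ^ j + vx * vy * h)" for a b h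
    by (simp add: xy_pow_Suc algebra_simps)
  have axes_E: "at_y0 (sc a * vx ^ i + sc b * vy ^ j + vx * vy * h) = fps_const a * fps_X ^ i"
    "at_x0 (sc a * vx ^ i + sc b * vy ^ j + vx * vy * h) = fps_const b * fps_X ^ j"
    if "1 \<le> i" "1 \<le> j" for a b h
    using that by (simp_all add: power_0_left)
  show ?thesis
  proof
    assume "type1 I k i j"
    then obtain a b h where ij: "1 \<le> i" "1 \<le> j" and ab: "a \<noteq> 0" "b \<noteq> 0"
      and "e \<in> colon I ?m \<and> axes ` colon I ?m = pair_principal (at_y0 e) (at_x0 e)"
      if "e = sc a * vx ^ i + sc b * vy ^ j + vx * vy * h" for e
      unfolding type1_def Let_def Suc_eq_plus1[symmetric] E generator[symmetric] by blast
    then show "1 \<le> i \<and> 1 \<le> j \<and> (\<exists>a b. a \<noteq> 0 \<and> b \<noteq> 0 \<and>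
      axes ` colon I ?m = pair_principal (fps_const a * fps_X ^ i) (fps_const b * fps_X ^ j))"
      using axes_E by metis
  next
    assume "1 \<le> i \<and> 1 \<le> j \<and> (\<exists>a b. a \<noteq> 0 \<and> b \<noteq> 0 \<and>
      axes ` colon I ?m = pair_principal (fps_const a * fps_X ^ i) (fps_const b * fps_X ^ j))"
    then obtain a b where ij: "1 \<le> i" "1 \<le> j" and ab: "a \<noteq> 0" "b \<noteq> 0"
      and image: "axes ` colon I ?m = pair_principal (fps_const a * fps_X ^ i) (fps_const b * fps_X ^ j)"
      by blast
    have "(1 * (fps_const a * fps_X ^ i), 1 * (fps_const b * fps_X ^ j)) \<in> axes ` colon I ?m"
      unfolding image pair_principal_def by blast
    then obtain e where e: "e \<in> colon I ?m" "axes e = axes (sc a * vx ^ i + sc b * vy ^ j)"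
      using ij by (auto simp: axes_def power_0_left)
    then obtain h where "e = sc a * vx ^ i + sc b * vy ^ j + vx * vy * h"
      by (auto simp: axes_eq_iff_xy_dvd algebra_simps elim!: dvdE)
    then show "type1 I k i j"
      unfolding type1_def Let_def Suc_eq_plus1[symmetric] E generator
      using ij ab e(1) image axes_E by metis
  qed
qed

lemma type2_iff_axes_image:
  assumes I: "is_ideal I"
  shows "type2 I k i j \<longleftrightarrow> 1 \<le> i \<and> 1 \<le> j \<and>
    axes ` colon I (vx ^ k * vy ^ k) = pair_monomial i j \<and> \<not> is_type1 I k"
proof -
  let ?m = "vx ^ k * vy ^ k"
  note generators = Jk_monomial_decomposition_iff[OF I]
  have E: "?m * vx ^ i + vx ^ Suc k * vy ^ Suc k * h1 = ?m * (vx ^ i + vx * vy * h1)"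
    "?m * vy ^ j + vx ^ Suc k * vy ^ Suc k * h2 = ?m * (vy ^ j + vx * vy * h2)" for h1 h2
    by (simp_all add: xy_pow_Suc algebra_simps)
  have axes_E: "axes (vx ^ i + vx * vy * h1) = (fps_X ^ i, 0)"
    "axes (vy ^ j + vx * vy * h2) = (0, fps_X ^ j)" if "1 \<le> i" "1 \<le> j" for h1 h2
    using that by (simp_all add: axes_def power_0_left)
  show ?thesis
  proof
    assume "type2 I k i j"
    then obtain h1 h2 where ij: "1 \<le> i" "1 \<le> j" and "\<not> is_type1 I k"
      and "?m * (vx ^ i + vx * vy * h1) \<in> Jk I k \<and> ?m * (vy ^ j + vx * vy * h2) \<in> Jk I k \<and>
        Jk I k = ideal_sum (Jk I (Suc k)) (ideal2 (?m * (vx ^ i + vx * vy * h1)) (?m * (vy ^ j + vx * vy * h2)))"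
      unfolding type2_def Let_def Suc_eq_plus1[symmetric] E by blast
    then show "1 \<le> i \<and> 1 \<le> j \<and> axes ` colon I ?m = pair_monomial i j \<and> \<not> is_type1 I k"
      using generators[OF axes_E[OF ij]] by blast
  next
    assume "1 \<le> i \<and> 1 \<le> j \<and> axes ` colon I ?m = pair_monomial i j \<and> \<not> is_type1 I k"
    then have ij: "1 \<le> i" "1 \<le> j" and image: "axes ` colon I ?m = pair_monomial i j"
      and not1: "\<not> is_type1 I k" by blast+
    have "(fps_X ^ i, 0) \<in> axes ` colon I ?m" "(0, fps_X ^ j) \<in> axes ` colon I ?m"
      unfolding image pair_monomial_def by simp_all
    then obtain e1 e2 where e: "e1 \<in> colon I ?m" "e2 \<in> colon I ?m"
      "axes e1 = axes (vx ^ i)" "axes e2 = axes (vy ^ j)"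
      using ij by (auto simp: axes_def power_0_left)
    then obtain h1 h2 where "e1 = vx ^ i + vx * vy * h1" "e2 = vy ^ j + vx * vy * h2"
      by (auto simp: axes_eq_iff_xy_dvd algebra_simps elim!: dvdE)
    then show "type2 I k i j"
      unfolding type2_def Let_def Suc_eq_plus1[symmetric] E
      using ij not1 e(1,2) image generators[OF axes_E[OF ij]] by metis
  qed
qed

lemma one_one_mem_axes_colon:
  assumes "is_ideal I" "vx ^ k * vy ^ k \<in> I"
  shows "(1, 1) \<in> axes ` colon I (vx ^ k * vy ^ k)"
proof -
  have "(1, 1) = axes 1" by (simp add: axes_def)
  then show ?thesis using colon_eq_UNIV[OF assms] by simp
qed

lemma not_type1_if_xy_pow_mem:
  assumes I: "is_ideal I" and m: "vx ^ k * vy ^ k \<in> I"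
  shows "\<not> type1 I k i j"
proof
  assume "type1 I k i j"
  then obtain a b where "1 \<le> i"
    "axes ` colon I (vx ^ k * vy ^ k) = pair_principal (fps_const a * fps_X ^ i) (fps_const b * fps_X ^ j)"
    by (auto simp: type1_iff_axes_image[OF I])
  then obtain r where "1 = r * (fps_const a * fps_X ^ i)"
    using one_one_mem_axes_colon[OF I m] by (auto simp: pair_principal_def)
  then have "fps_nth 1 0 = fps_nth (r * (fps_const a * fps_X ^ i)) (0::nat)" by simp
  then show False using \<open>1 \<le> i\<close> by simp
qed

lemma not_type2_if_xy_pow_mem:
  assumes I: "is_ideal I" and m: "vx ^ k * vy ^ k \<in> I"
  shows "\<not> type2 I k i j"
proof
  assume "type2 I k i j"
  then have "1 \<le> i" "axes ` colon I (vx ^ k * vy ^ k) = pair_monomial i j"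
    by (auto simp: type2_iff_axes_image[OF I])
  then obtain r where "1 = fps_X ^ i * r"
    using one_one_mem_axes_colon[OF I m] by (auto simp: pair_monomial_def elim!: dvdE)
  then have "fps_nth 1 0 = fps_nth (fps_X ^ i * r) (0::nat)" by simp
  then show False using \<open>1 \<le> i\<close> by simp
qed

lemma type1_or_type2_if_xy_pow_notin:
  assumes I: "is_ideal I" and cl: "colength I n" and m: "vx ^ k * vy ^ k \<notin> I"
  shows "is_type1 I k \<or> is_type2 I k"
proof -
  let ?K = "colon I (vx ^ k * vy ^ k)"
  have K: "is_ideal ?K" "1 \<notin> ?K" "I \<subseteq> ?K"
    using m is_ideal_colon[OF I] subset_colon[OF I] by (auto simp: colon_def)
  obtain p q where "p \<noteq> 0" "(p, 0) \<in> axes ` ?K" "q \<noteq> 0" "(0, q) \<in> axes ` ?K"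
    using axes_image_pure_x[OF K(1,2) I cl K(3)] axes_image_pure_y[OF K(1,2) I cl K(3)] by blast
  then consider (principal) i j a b where "1 \<le> i" "1 \<le> j" "a \<noteq> 0" "b \<noteq> 0"
      "axes ` ?K = pair_principal (fps_const a * fps_X ^ i) (fps_const b * fps_X ^ j)"
    | (monomial) i j where "1 \<le> i" "1 \<le> j" "axes ` ?K = pair_monomial i j"
    using pair_ideal_classification[OF pair_ideal_axes_image[OF K(1,2)]] by metis
  then show ?thesis
    by cases (auto simp: is_type1_def is_type2_def type1_iff_axes_image[OF I] type2_iff_axes_image[OF I])
qed

lemma Jk_trichotomy:
  assumes I: "is_ideal I" and cl: "colength I n"
  shows "(vx ^ k * vy ^ k \<in> I \<and> \<not> is_type1 I k \<and> \<not> is_type2 I k) \<or>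
    (vx ^ k * vy ^ k \<notin> I \<and> is_type1 I k \<and> \<not> is_type2 I k) \<or>
    (vx ^ k * vy ^ k \<notin> I \<and> \<not> is_type1 I k \<and> is_type2 I k)"
proof (cases "vx ^ k * vy ^ k \<in> I")
  case True
  then show ?thesis
    using not_type1_if_xy_pow_mem[OF I True] not_type2_if_xy_pow_mem[OF I True]
    by (simp add: is_type1_def is_type2_def)
next
  case False
  moreover have "is_type2 I k \<Longrightarrow> \<not> is_type1 I k"
    unfolding is_type2_def type2_def by blast
  ultimately show ?thesis
    using type1_or_type2_if_xy_pow_notin[OF I cl] by blast
qed

section \<open>Colength of the layers\<close>

lemma fps_X_power_dvd_iff: "fps_X ^ i dvd (p :: complex fps) \<longleftrightarrow> (\<forall>l<i. fps_nth p l = 0)"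
proof
  assume "fps_X ^ i dvd p"
  then show "\<forall>l<i. fps_nth p l = 0" by (auto simp: fps_X_power_mult_nth elim!: dvdE)
next
  assume "\<forall>l<i. fps_nth p l = 0"
  then have "p = fps_shift i p * fps_X ^ i"
    by (intro fps_ext) (auto simp: fps_X_power_mult_right_nth)
  then show "fps_X ^ i dvd p" by (metis dvd_triv_right)
qed

text \<open>Coordinates of \<open>(p, q)\<close> modulo \<open>pair_monomial i j\<close>: \<open>p\<^sub>0, \<dots>, p\<^sub>i\<^sub>-\<^sub>1\<close> followed by
  \<open>q\<^sub>1, \<dots>, q\<^sub>j\<^sub>-\<^sub>1\<close>; the coefficient \<open>q\<^sub>0\<close> is skipped since it equals \<open>p\<^sub>0\<close>.\<close>
definition monomial_coords :: "nat \<Rightarrow> nat \<Rightarrow> complex fps \<Rightarrow> complex fps \<Rightarrow> nat \<Rightarrow> complex" where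
  "monomial_coords i j p q l = (if l < i then fps_nth p l else fps_nth q (l + 1 - i))"

definition principal_coords ::
    "complex \<Rightarrow> complex \<Rightarrow> nat \<Rightarrow> nat \<Rightarrow> complex fps \<Rightarrow> complex fps \<Rightarrow> nat \<Rightarrow> complex" where
  "principal_coords a b i j p q l =
     (if l < i + j - 1 then monomial_coords i j p q l else b * fps_nth p i - a * fps_nth q j)"

lemma mem_pair_monomial_iff_coords:
  assumes ij: "1 \<le> i" "1 \<le> j" and pq: "fps_nth p 0 = fps_nth q 0"
  shows "(p, q) \<in> pair_monomial i j \<longleftrightarrow> (\<forall>l<i + j - 1. monomial_coords i j p q l = 0)"
proof -
  have "(\<forall>l<i + j - 1. monomial_coords i j p q l = 0) \<longleftrightarrow>
      (\<forall>l<i. fps_nth p l = 0) \<and> (\<forall>m<j. 1 \<le> m \<longrightarrow> fps_nth q m = 0)"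
  proof safe
    assume all: "\<forall>l<i + j - 1. monomial_coords i j p q l = 0"
    fix l assume "l < i"
    then have "monomial_coords i j p q l = 0" using all ij by simp
    then show "fps_nth p l = 0" using \<open>l < i\<close> by (simp add: monomial_coords_def)
  next
    assume all: "\<forall>l<i + j - 1. monomial_coords i j p q l = 0"
    fix m assume "m < j" "1 \<le> m"
    then have "monomial_coords i j p q (m + i - 1) = 0" using all by simp
    moreover have "\<not> m + i - 1 < i" "m + i - 1 + 1 - i = m" using \<open>1 \<le> m\<close> by auto
    ultimately show "fps_nth q m = 0" by (simp add: monomial_coords_def)
  qed (auto simp: monomial_coords_def)
  moreover have "(\<forall>m<j. fps_nth q m = 0) \<longleftrightarrow> fps_nth q 0 = 0 \<and> (\<forall>m<j. 1 \<le> m \<longrightarrow> fps_nth q m = 0)"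
    using ij by (auto simp: Suc_le_eq)
  ultimately show ?thesis
    using ij pq by (auto simp: pair_monomial_def fps_X_power_dvd_iff)
qed

lemma fps_const_inverse_mult: "(c::complex) \<noteq> 0 \<Longrightarrow> fps_const c * fps_const (inverse c) = 1"
  by simp

lemma mem_pair_principal_iff:
  assumes ab: "a \<noteq> 0" "b \<noteq> 0"
  shows "(p, q) \<in> pair_principal (fps_const a * fps_X ^ i) (fps_const b * fps_X ^ j) \<longleftrightarrow>
    (p, q) \<in> pair_monomial i j \<and> b * fps_nth p i = a * fps_nth q j"
proof
  assume "(p, q) \<in> pair_principal (fps_const a * fps_X ^ i) (fps_const b * fps_X ^ j)"
  then obtain r s where "p = fps_X ^ i * (fps_const a * r)" "q = fps_X ^ j * (fps_const b * s)"
      "fps_nth r 0 = fps_nth s 0"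
    unfolding pair_principal_def by (auto simp: mult_ac)
  then show "(p, q) \<in> pair_monomial i j \<and> b * fps_nth p i = a * fps_nth q j"
    by (simp add: pair_monomial_def fps_X_power_mult_nth)
next
  assume "(p, q) \<in> pair_monomial i j \<and> b * fps_nth p i = a * fps_nth q j"
  then obtain s t where st: "p = fps_X ^ i * s" "q = fps_X ^ j * t" and "b * fps_nth s 0 = a * fps_nth t 0"
    by (auto simp: pair_monomial_def fps_X_power_mult_nth elim!: dvdE)
  then have "fps_nth (fps_const (inverse a) * s) 0 = fps_nth (fps_const (inverse b) * t) 0"
    using ab by (simp add: field_simps)
  moreover have "p = (fps_const (inverse a) * s) * (fps_const a * fps_X ^ i)"
    "q = (fps_const (inverse b) * t) * (fps_const b * fps_X ^ j)"
    using ab by (simp_all add: st mult_ac fps_const_inverse_mult)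
  ultimately show "(p, q) \<in> pair_principal (fps_const a * fps_X ^ i) (fps_const b * fps_X ^ j)"
    unfolding pair_principal_def by blast
qed

lemma colength_axes_preimage:
  fixes \<Psi> :: "complex fps \<Rightarrow> complex fps \<Rightarrow> nat \<Rightarrow> complex"
  assumes add: "\<And>p q p' q' l. l < d \<Longrightarrow> \<Psi> (p + p') (q + q') l = \<Psi> p q l + \<Psi> p' q' l"
    and scale: "\<And>c p q l. l < d \<Longrightarrow> \<Psi> (fps_const c * p) (fps_const c * q) l = c * \<Psi> p q l"
    and dual: "\<And>l. l < d \<Longrightarrow>
      \<exists>p q. fps_nth p 0 = fps_nth q 0 \<and> (\<forall>l'<d. \<Psi> p q l' = (if l' = l then 1 else 0))"
    and mem: "\<And>p q. fps_nth p 0 = fps_nth q 0 \<Longrightarrow> (p, q) \<in> P \<longleftrightarrow> (\<forall>l<d. \<Psi> p q l = 0)"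
  shows "colength {g. axes g \<in> P} d"
proof (rule colength_by_coordinates[where \<Phi> = "\<lambda>g. \<Psi> (at_y0 g) (at_x0 g)"])
  fix l assume "l < d"
  then obtain p q where "fps_nth p 0 = fps_nth q 0" "\<forall>l'<d. \<Psi> p q l' = (if l' = l then 1 else 0)"
    using dual by blast
  then show "\<exists>b. \<forall>l'<d. \<Psi> (at_y0 b) (at_x0 b) l' = (if l' = l then 1 else 0)"
    by (intro exI[of _ "glue_axes p q"]) simp
qed (simp_all add: add scale mem axes_def at_y0_at_x0_nth_0)

lemma monomial_coords_dual_basis:
  assumes l: "l < i + j - 1"
  shows "\<exists>p q. fps_nth p 0 = fps_nth q 0 \<and>
    (\<forall>l'<i + j - 1. monomial_coords i j p q l' = (if l' = l then 1 else 0))"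
proof (cases "l < i")
  case True
  then show ?thesis
    by (intro exI[of _ "fps_X ^ l"] exI[of _ "fps_const (if l = 0 then 1 else 0)"])
      (auto simp: monomial_coords_def)
next
  case False
  then show ?thesis
    using l by (intro exI[of _ 0] exI[of _ "fps_X ^ (l + 1 - i)"]) (auto simp: monomial_coords_def)
qed

lemma colength_pair_monomial:
  assumes ij: "1 \<le> i" "1 \<le> j"
  shows "colength {g. axes g \<in> pair_monomial i j} (i + j - 1)"
proof (rule colength_axes_preimage[where \<Psi> = "monomial_coords i j"])
  show "\<And>l. l < i + j - 1 \<Longrightarrow> \<exists>p q. fps_nth p 0 = fps_nth q 0 \<and>
      (\<forall>l'<i + j - 1. monomial_coords i j p q l' = (if l' = l then 1 else 0))"
    by (rule monomial_coords_dual_basis)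
qed (simp_all add: monomial_coords_def mem_pair_monomial_iff_coords[OF ij] algebra_simps)

lemma mem_pair_principal_iff_coords:
  assumes ij: "1 \<le> i" "1 \<le> j" and ab: "a \<noteq> 0" "b \<noteq> 0" and pq: "fps_nth p 0 = fps_nth q 0"
  shows "(p, q) \<in> pair_principal (fps_const a * fps_X ^ i) (fps_const b * fps_X ^ j) \<longleftrightarrow>
    (\<forall>l<i + j. principal_coords a b i j p q l = 0)"
proof -
  have "(\<forall>l<i + j. principal_coords a b i j p q l = 0) \<longleftrightarrow>
      (\<forall>l<i + j - 1. monomial_coords i j p q l = 0) \<and> b * fps_nth p i = a * fps_nth q j"
  proof
    assume all: "\<forall>l<i + j. principal_coords a b i j p q l = 0"
    have "principal_coords a b i j p q (i + j - 1) = 0" using all ij by simp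
    moreover have "principal_coords a b i j p q l = 0" if "l < i + j - 1" for l
      using all that by simp
    ultimately show "(\<forall>l<i + j - 1. monomial_coords i j p q l = 0) \<and> b * fps_nth p i = a * fps_nth q j"
      by (simp add: principal_coords_def)
  qed (simp add: principal_coords_def)
  then show ?thesis
    using mem_pair_principal_iff[OF ab] mem_pair_monomial_iff_coords[OF ij pq] by simp
qed

lemma principal_coords_dual_basis:
  assumes ij: "1 \<le> i" "1 \<le> j" and a: "a \<noteq> 0" and l: "l < i + j"
  shows "\<exists>p q. fps_nth p 0 = fps_nth q 0 \<and>
    (\<forall>l'<i + j. principal_coords a b i j p q l' = (if l' = l then 1 else 0))"
proof (cases "l < i")
  case True
  then show ?thesis
    using ij by (intro exI[of _ "fps_X ^ l"] exI[of _ "fps_const (if l = 0 then 1 else 0)"])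
      (auto simp: principal_coords_def monomial_coords_def)
next
  case False
  show ?thesis
  proof (cases "l < i + j - 1")
    case True
    then show ?thesis
      using False by (intro exI[of _ 0] exI[of _ "fps_X ^ (l + 1 - i)"])
        (auto simp: principal_coords_def monomial_coords_def)
  next
    case last: False
    then show ?thesis
      using l ij a by (intro exI[of _ 0] exI[of _ "fps_const (- inverse a) * fps_X ^ j"])
        (auto simp: principal_coords_def monomial_coords_def)
  qed
qed

lemma colength_pair_principal:
  assumes ij: "1 \<le> i" "1 \<le> j" and ab: "a \<noteq> 0" "b \<noteq> 0"
  shows "colength {g. axes g \<in> pair_principal (fps_const a * fps_X ^ i) (fps_const b * fps_X ^ j)} (i + j)"
proof (rule colength_axes_preimage[where \<Psi> = "principal_coords a b i j"])
  show "\<And>l. l < i + j \<Longrightarrow> \<exists>p q. fps_nth p 0 = fps_nth q 0 \<and>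
      (\<forall>l'<i + j. principal_coords a b i j p q l' = (if l' = l then 1 else 0))"
    by (rule principal_coords_dual_basis[OF ij ab(1)])
qed (simp_all add: principal_coords_def monomial_coords_def algebra_simps mem_pair_principal_iff_coords[OF ij ab])

definition plus_xy_pow :: "ps set \<Rightarrow> nat \<Rightarrow> ps set" where
  "plus_xy_pow I k = ideal_sum I (principal (vx ^ k * vy ^ k))"

lemma plus_xy_pow_0: "is_ideal I \<Longrightarrow> plus_xy_pow I 0 = UNIV"
  by (force simp: plus_xy_pow_def mem_ideal_sum mem_principal dest: is_ideal_zero)

lemma plus_xy_pow_eq_self:
  assumes I: "is_ideal I" and m: "vx ^ k * vy ^ k \<in> I"
  shows "plus_xy_pow I k = I"
proof (intro subset_antisym subsetI)
  fix g assume "g \<in> plus_xy_pow I k"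
  then obtain g0 t where "g = g0 + vx ^ k * vy ^ k * t" "g0 \<in> I"
    unfolding plus_xy_pow_def mem_ideal_sum mem_principal by blast
  then show "g \<in> I" using is_ideal_add[OF I _ is_ideal_mult_right[OF I m]] by blast
next
  fix g assume "g \<in> I"
  then show "g \<in> plus_xy_pow I k"
    unfolding plus_xy_pow_def mem_ideal_sum mem_principal by force
qed

lemma plus_xy_pow_Suc:
  assumes I: "is_ideal I"
  shows "ideal_sum (plus_xy_pow I (Suc k)) (principal (vx ^ k * vy ^ k)) = plus_xy_pow I k"
proof (intro subset_antisym subsetI)
  fix g assume "g \<in> ideal_sum (plus_xy_pow I (Suc k)) (principal (vx ^ k * vy ^ k))"
  then obtain g0 s t where "g0 \<in> I" "g = (g0 + vx ^ Suc k * vy ^ Suc k * s) + vx ^ k * vy ^ k * t"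
    unfolding plus_xy_pow_def mem_ideal_sum mem_principal by blast
  moreover have "\<dots> = g0 + vx ^ k * vy ^ k * (vx * vy * s + t)"
    by (simp add: xy_pow_Suc algebra_simps)
  ultimately show "g \<in> plus_xy_pow I k"
    unfolding plus_xy_pow_def mem_ideal_sum mem_principal by blast
next
  fix g assume "g \<in> plus_xy_pow I k"
  then obtain g0 t where "g = (g0 + vx ^ Suc k * vy ^ Suc k * 0) + vx ^ k * vy ^ k * t" "g0 \<in> I"
    unfolding plus_xy_pow_def mem_ideal_sum mem_principal by auto
  then show "g \<in> ideal_sum (plus_xy_pow I (Suc k)) (principal (vx ^ k * vy ^ k))"
    unfolding plus_xy_pow_def mem_ideal_sum mem_principal by blast
qed

lemma colon_plus_xy_pow_Suc:
  assumes I: "is_ideal I"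
  shows "colon (plus_xy_pow I (Suc k)) (vx ^ k * vy ^ k) = {g. axes g \<in> axes ` colon I (vx ^ k * vy ^ k)}"
proof (intro subset_antisym subsetI)
  fix g assume "g \<in> colon (plus_xy_pow I (Suc k)) (vx ^ k * vy ^ k)"
  then obtain g0 t where g: "vx ^ k * vy ^ k * g = g0 + vx ^ Suc k * vy ^ Suc k * t" "g0 \<in> I"
    unfolding colon_def plus_xy_pow_def mem_ideal_sum mem_principal by auto
  then have "g - vx * vy * t \<in> colon I (vx ^ k * vy ^ k)"
    by (simp add: colon_def xy_pow_Suc algebra_simps)
  moreover have "axes g = axes (g - vx * vy * t)" by (simp add: axes_def)
  ultimately show "g \<in> {g. axes g \<in> axes ` colon I (vx ^ k * vy ^ k)}" by simp
next
  fix g assume "g \<in> {g. axes g \<in> axes ` colon I (vx ^ k * vy ^ k)}"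
  then obtain \<kappa> where \<kappa>: "\<kappa> \<in> colon I (vx ^ k * vy ^ k)" "axes g = axes \<kappa>" by auto
  then obtain h where "g - \<kappa> = vx * vy * h" by (auto simp: axes_eq_iff_xy_dvd elim: dvdE)
  then have "vx ^ k * vy ^ k * g = vx ^ k * vy ^ k * \<kappa> + vx ^ Suc k * vy ^ Suc k * h"
    by (simp add: xy_pow_Suc algebra_simps)
  moreover have "vx ^ k * vy ^ k * \<kappa> \<in> I" using \<kappa>(1) by (simp add: colon_def)
  ultimately show "g \<in> colon (plus_xy_pow I (Suc k)) (vx ^ k * vy ^ k)"
    unfolding colon_def plus_xy_pow_def mem_ideal_sum mem_principal by blast
qed

lemma colength_plus_xy_pow:
  assumes I: "is_ideal I"
  shows "(\<And>l. l < k \<Longrightarrow> colength {g. axes g \<in> axes ` colon I (vx ^ l * vy ^ l)} (\<Delta> l)) \<Longrightarrow>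
    colength (plus_xy_pow I k) (\<Sum>l<k. \<Delta> l)"
proof (induction k)
  case 0
  then show ?case using plus_xy_pow_0[OF I] colength_UNIV by simp
next
  case (Suc k)
  have "is_ideal (plus_xy_pow I (Suc k))"
    unfolding plus_xy_pow_def using I by (intro is_ideal_ideal_sum is_ideal_principal)
  moreover have "colength (plus_xy_pow I k) (\<Sum>l<k. \<Delta> l)"
    using Suc by simp
  moreover have "colength (colon (plus_xy_pow I (Suc k)) (vx ^ k * vy ^ k)) (\<Delta> k)"
    using Suc.prems unfolding colon_plus_xy_pow_Suc[OF I] by simp
  ultimately show ?case
    using colength_add_colon[of "plus_xy_pow I (Suc k)" "vx ^ k * vy ^ k"] plus_xy_pow_Suc[OF I, of k]
    by simp
qed

lemma colength_axes_colon_if_delta_rel: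
  assumes I: "is_ideal I" and d: "delta_rel I k d"
  shows "colength {g. axes g \<in> axes ` colon I (vx ^ k * vy ^ k)} d"
  using d unfolding delta_rel_def
proof (elim disjE exE conjE)
  assume "vx ^ k * vy ^ k \<in> I" "d = 0"
  then show ?thesis using colon_eq_UNIV[OF I] colength_UNIV by simp
next
  fix i j assume "type1 I k i j" "d = i + j"
  then show ?thesis using colength_pair_principal by (auto simp: type1_iff_axes_image[OF I])
next
  fix i j assume "type2 I k i j" "d = i + j - 1"
  then show ?thesis using colength_pair_monomial by (auto simp: type2_iff_axes_image[OF I])
qed

theorem mainTheorem12:
  fixes u v n :: nat and I :: "ps set"
  assumes "1 \<le> u" and "u \<le> v" and "hilb_curve u v n I"
  shows "(\<forall>k<v.
            (vx ^ k * vy ^ k \<in> I \<and> \<not> is_type1 I k \<and> \<not> is_type2 I k) \<or>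
            (vx ^ k * vy ^ k \<notin> I \<and> is_type1 I k \<and> \<not> is_type2 I k) \<or>
            (vx ^ k * vy ^ k \<notin> I \<and> \<not> is_type1 I k \<and> is_type2 I k))
      \<and> (\<forall>\<Delta> :: nat \<Rightarrow> nat. (\<forall>k<v. delta_rel I k (\<Delta> k)) \<longrightarrow> (\<Sum>k<v. \<Delta> k) = n)"
proof -
  have I: "is_ideal I" and cl: "colength I n" and xy: "vx ^ u * vy ^ v \<in> I"
    using assms(3) unfolding hilb_curve_def by blast+
  \<comment> \<open>Only \<open>x\<^sup>v y\<^sup>v \<in> I\<close> is used below.\<close>
  have "vx ^ v * vy ^ v = vx ^ (v - u) * (vx ^ u * vy ^ v)"
    using assms(2) by (simp add: mult.assoc flip: power_add)
  then have Mv: "plus_xy_pow I v = I"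
    using plus_xy_pow_eq_self[OF I] is_ideal_mult[OF I xy, of "vx ^ (v - u)"] by metis
  have "(\<Sum>k<v. \<Delta> k) = n" if "\<forall>k<v. delta_rel I k (\<Delta> k)" for \<Delta>
  proof -
    have "colength (plus_xy_pow I v) (\<Sum>k<v. \<Delta> k)"
      using that by (intro colength_plus_xy_pow[OF I] colength_axes_colon_if_delta_rel[OF I]) simp
    then show ?thesis
      using Mv colength_unique[OF I cl] by simp
  qed
  then show ?thesis
    using Jk_trichotomy[OF I cl] by blast
qed

end
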